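(* For every $\varepsilon>0$ there exists $\delta>0$ such that the following holds. Let $G$ be a connected graph on vertex set $[n]$ with maximum degree $\Delta$, let $R\sim G(n,\varepsilon/n)$, and let $G^*=G\cup R$. Then asymptotically almost surely (i.e., with probability tending to $1$ as $n\to\infty$) the graph $G^*$ satisfies $\iota(G^* )\ge \frac{\delta}{\Delta^3\log n}$.
   Context: $G(n,p)$ denotes the binomial random graph on vertex set $[n]$ in which each of the $\binom n2$ pairs is an edge independently with probability $p$. $G\cup R$ is the graph on $[n]$ whose edge set is the union of the edge sets of $G$ and $R$. For a graph $H$ on vertex set $V$ and $S\subseteq V$, $N_H(S)$ is the set of vertices in $V\setminus S$ having a neighbor in $S$. The vertex-isoperimetric number is $\iota(H)=\min\{|N_H(U)|/|U| : U\subseteq V,\ 0<|U|\le |V|/2\}$. "Asymptotically almost surely" is understood for an arbitrary sequence of such graphs $G=G_n$, with $n\to\infty$. *)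

theory Defs
  imports Complex_Main
begin

definition all_edges :: "nat \<Rightarrow> nat set set" where
  "all_edges n = {e. \<exists>u v. e = {u, v} \<and> u \<noteq> v \<and> u \<in> {1..n} \<and> v \<in> {1..n}}"

definition is_graph :: "nat \<Rightarrow> nat set set \<Rightarrow> bool" where
  "is_graph n E \<longleftrightarrow> E \<subseteq> all_edges n"

definition adj_rel :: "nat set set \<Rightarrow> (nat \<times> nat) set" where
  "adj_rel E = {(u, v). {u, v} \<in> E}"

definition graph_connected :: "nat \<Rightarrow> nat set set \<Rightarrow> bool" where
  "graph_connected n E \<longleftrightarrow> (\<forall>u\<in>{1..n}. \<forall>v\<in>{1..n}. (u, v) \<in> (adj_rel E)\<^sup>*)"

definition degree :: "nat set set \<Rightarrow> nat \<Rightarrow> nat" where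
  "degree E v = card {u. {u, v} \<in> E \<and> u \<noteq> v}"

definition max_degree :: "nat \<Rightarrow> nat set set \<Rightarrow> nat" where
  "max_degree n E = Max (degree E ` {1..n})"

definition nbhd :: "nat \<Rightarrow> nat set set \<Rightarrow> nat set \<Rightarrow> nat set" where
  "nbhd n E S = {v \<in> {1..n} - S. \<exists>u\<in>S. {u, v} \<in> E}"

text \<open>Vertex-isoperimetric number (minimum over a finite nonempty set when n \<ge> 2).\<close>
definition iota :: "nat \<Rightarrow> nat set set \<Rightarrow> real" where
  "iota n E = Min {real (card (nbhd n E U)) / real (card U) | U.
                    U \<subseteq> {1..n} \<and> 0 < card U \<and> real (card U) \<le> real n / 2}"

definition gnp_prob :: "nat \<Rightarrow> real \<Rightarrow> (nat set set \<Rightarrow> bool) \<Rightarrow> real" where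
  "gnp_prob n p P = (\<Sum>R\<in>Pow (all_edges n).
      if P R then p ^ card R * (1 - p) ^ (card (all_edges n) - card R) else 0)"

end

theory Submission
  imports Defs "HOL-Real_Asymp.Real_Asymp"
begin

text \<open>
  Let alpha = eps / (40 Delta^3 log n). If iota(G + R) < alpha, pick U attaining the minimum and
  let W be its neighbourhood in G + R. Then W is nonempty by connectivity, |W| < alpha |U|, U is a
  union of components of G - W, and R contains none of the |U| (n - |U| - |W|) >= |U| n / 4 edges
  between U and [n] - U - W. As G is connected, U is determined by its intersection with N_G(W),
  and |N_G(W)| <= Delta |W|, so a fixed W admits at most 2^(Delta |W|) <= n^(Delta |W|) such U.
  A union bound over the pairs (W, U) bounds the failure probability by
  sum_W n^(Delta |W|) exp(-eps |U| / 4) <= sum_W n^(-9 |W|) <= exp(n^(-8)) - 1 = o(1).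
\<close>

subsection \<open>The random graph G(n,p)\<close>

lemma sum_Pow_binomial:
  assumes "finite B"
  shows "(\<Sum>R\<in>Pow B. (a::real) ^ card R * b ^ (card B - card R)) = (a + b) ^ card B"
proof -
  have "(\<Prod>x\<in>B. a + b) = (\<Sum>X\<in>Pow B. (\<Prod>x\<in>X. a) * (\<Prod>x\<in>B-X. b))"
    by (rule prod_add[OF assms])
  also have "\<dots> = (\<Sum>R\<in>Pow B. a ^ card R * b ^ (card B - card R))"
    using assms by (intro sum.cong) (auto simp: card_Diff_subset finite_subset)
  finally show ?thesis by simp
qed

lemma finite_all_edges: "finite (all_edges n)"
proof -
  have "all_edges n \<subseteq> Pow {1..n}" unfolding all_edges_def by auto
  thus ?thesis by (rule finite_subset) simp
qed

lemma gnp_prob_avoid: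
  assumes "F \<subseteq> all_edges n"
  shows "gnp_prob n p (\<lambda>R. R \<inter> F = {}) = (1 - p) ^ card F"
proof -
  let ?A = "all_edges n"
  have fA: "finite ?A" by (rule finite_all_edges)
  have fF: "finite F" using assms fA finite_subset by blast
  have cA: "card ?A = card (?A - F) + card F"
    using assms fA fF by (metis card_Diff_subset card_mono le_add_diff_inverse2)
  have "gnp_prob n p (\<lambda>R. R \<inter> F = {})
      = (\<Sum>R\<in>{R\<in>Pow ?A. R \<inter> F = {}}. p ^ card R * (1 - p) ^ (card ?A - card R))"
    unfolding gnp_prob_def by (rule sum.inter_filter[symmetric]) (simp add: fA)
  also have "{R\<in>Pow ?A. R \<inter> F = {}} = Pow (?A - F)" by auto
  also have "(\<Sum>R\<in>Pow (?A - F). p ^ card R * (1 - p) ^ (card ?A - card R))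
      = (\<Sum>R\<in>Pow (?A - F). (1 - p) ^ card F * (p ^ card R * (1 - p) ^ (card (?A - F) - card R)))"
  proof (rule sum.cong[OF refl])
    fix R assume "R \<in> Pow (?A - F)"
    hence "card R \<le> card (?A - F)" using fA by (auto intro: card_mono)
    hence "card ?A - card R = (card (?A - F) - card R) + card F" using cA by linarith
    thus "p ^ card R * (1 - p) ^ (card ?A - card R)
        = (1 - p) ^ card F * (p ^ card R * (1 - p) ^ (card (?A - F) - card R))"
      by (simp add: power_add)
  qed
  also have "\<dots> = (1 - p) ^ card F * (p + (1 - p)) ^ card (?A - F)"
    by (simp add: sum_distrib_left[symmetric] sum_Pow_binomial fA)
  finally show ?thesis by simp
qed

lemma gnp_prob_compl: "gnp_prob n p P + gnp_prob n p (\<lambda>R. \<not> P R) = 1"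
proof -
  have "gnp_prob n p P + gnp_prob n p (\<lambda>R. \<not> P R) = gnp_prob n p (\<lambda>R. R \<inter> {} = {})"
    unfolding gnp_prob_def by (simp add: sum.distrib[symmetric]) (rule sum.cong, auto)
  thus ?thesis using gnp_prob_avoid[of "{}" n p] by simp
qed

lemma gnp_prob_nonneg:
  assumes "0 \<le> p" "p \<le> 1"
  shows "0 \<le> gnp_prob n p P"
  unfolding gnp_prob_def using assms by (intro sum_nonneg) auto

lemma gnp_prob_le_1:
  assumes "0 \<le> p" "p \<le> 1"
  shows "gnp_prob n p P \<le> 1"
  using gnp_prob_compl[of n p P] gnp_prob_nonneg[OF assms, of n "\<lambda>R. \<not> P R"] by linarith

lemma gnp_prob_union_bound:
  assumes p: "0 \<le> p" "p \<le> 1" and fI: "finite I"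
    and F: "\<And>i. i \<in> I \<Longrightarrow> F i \<subseteq> all_edges n"
    and cover: "\<And>R. R \<subseteq> all_edges n \<Longrightarrow> P R \<Longrightarrow> \<exists>i\<in>I. R \<inter> F i = {}"
  shows "gnp_prob n p P \<le> (\<Sum>i\<in>I. (1 - p) ^ card (F i))"
proof -
  let ?A = "all_edges n"
  let ?w = "\<lambda>R. p ^ card R * (1 - p) ^ (card ?A - card R)"
  have w0: "0 \<le> ?w R" for R using p by simp
  have "gnp_prob n p P \<le> (\<Sum>R\<in>Pow ?A. \<Sum>i\<in>I. if R \<inter> F i = {} then ?w R else 0)"
    unfolding gnp_prob_def
  proof (rule sum_mono)
    fix R assume R: "R \<in> Pow ?A"
    show "(if P R then ?w R else 0) \<le> (\<Sum>i\<in>I. if R \<inter> F i = {} then ?w R else 0)"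
    proof (cases "P R")
      case True
      then obtain i where i: "i \<in> I" "R \<inter> F i = {}" using cover R by blast
      have "?w R = (if R \<inter> F i = {} then ?w R else 0)" using i by simp
      also have "\<dots> \<le> (\<Sum>i\<in>I. if R \<inter> F i = {} then ?w R else 0)"
        by (rule member_le_sum[OF i(1)]) (use w0 fI in auto)
      finally show ?thesis using True by simp
    next
      case False
      thus ?thesis using w0 by (auto intro!: sum_nonneg)
    qed
  qed
  also have "\<dots> = (\<Sum>i\<in>I. gnp_prob n p (\<lambda>R. R \<inter> F i = {}))"
    unfolding gnp_prob_def by (rule sum.swap)
  also have "\<dots> = (\<Sum>i\<in>I. (1 - p) ^ card (F i))"
    by (simp add: gnp_prob_avoid F)
  finally show ?thesis .
qed

lemma one_minus_power_le_exp:
  assumes "p \<le> 1"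
  shows "(1 - p) ^ m \<le> exp (- (p * real m))"
proof -
  have "(1 - p) ^ m \<le> exp (- p) ^ m"
    by (rule power_mono) (use assms exp_ge_add_one_self[of "-p"] in auto)
  also have "\<dots> = exp (- (p * real m))" by (simp add: exp_of_nat_mult[symmetric] mult.commute)
  finally show ?thesis .
qed

subsection \<open>Connectivity and unions of components\<close>

lemma is_graph_edgeD:
  "is_graph n G \<Longrightarrow> {a, b} \<in> G \<Longrightarrow> a \<in> {1..n} \<and> b \<in> {1..n} \<and> a \<noteq> b"
  unfolding is_graph_def all_edges_def by (auto simp: doubleton_eq_iff)

lemma rtrancl_leaves_set:
  assumes "(x, z) \<in> r\<^sup>*" "x \<in> U" "z \<notin> U"
  shows "\<exists>a\<in>U. \<exists>b. b \<notin> U \<and> (a, b) \<in> r"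
  using assms by (induction rule: converse_rtrancl_induct) blast+

lemma connected_edge_leaving:
  assumes "graph_connected n G" "x \<in> U" "U \<subseteq> {1..n}" "z \<in> {1..n}" "z \<notin> U"
  shows "\<exists>a\<in>U. \<exists>b. b \<notin> U \<and> {a, b} \<in> G"
proof -
  have "(x, z) \<in> (adj_rel G)\<^sup>*" using assms unfolding graph_connected_def by blast
  from rtrancl_leaves_set[OF this assms(2,5)] show ?thesis by (auto simp: adj_rel_def)
qed

text \<open>U is a union of connected components of G - W.\<close>
definition component_union :: "nat \<Rightarrow> nat set set \<Rightarrow> nat set \<Rightarrow> nat set \<Rightarrow> bool" where
  "component_union n G W U \<longleftrightarrow>
     U \<subseteq> {1..n} - W \<and> (\<forall>a\<in>U. \<forall>b. {a, b} \<in> G \<longrightarrow> b \<notin> W \<longrightarrow> b \<in> U)"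

text \<open>Following a path from x to W, the last vertex before W lies in N_G(W), and
  membership in U cannot change along the path before that.\<close>
lemma component_union_trace_mono:
  assumes G: "is_graph n G" and conn: "graph_connected n G" and W: "W \<subseteq> {1..n}" "z \<in> W"
    and U: "component_union n G W U" and U': "component_union n G W U'"
    and trace: "U \<inter> nbhd n G W = U' \<inter> nbhd n G W"
  shows "U \<subseteq> U'"
proof
  fix x assume "x \<in> U"
  with U have x: "x \<in> {1..n}" "x \<notin> W" "x \<in> U" unfolding component_union_def by auto
  have "(x, z) \<in> (adj_rel G)\<^sup>*" using conn x W unfolding graph_connected_def by blast
  then show "x \<in> U'" using x(2,3)
  proof (induction rule: converse_rtrancl_induct)
    case base thus ?case using W by simp
  next
    case (step y w)
    have e: "{y, w} \<in> G" using step(1) by (simp add: adj_rel_def)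
    show ?case
    proof (cases "w \<in> W")
      case True
      have "y \<in> nbhd n G W"
        unfolding nbhd_def using True e is_graph_edgeD[OF G e] step(4) by (auto simp: insert_commute)
      thus ?thesis using step(5) trace by blast
    next
      case False
      have "w \<in> U" using U e False step(5) unfolding component_union_def by blast
      hence "w \<in> U'" using step.IH False by blast
      thus ?thesis using U' e step(4) unfolding component_union_def by (metis insert_commute)
    qed
  qed
qed

lemma finite_component_unions: "finite {U. component_union n G W U}"
  by (rule finite_subset[of _ "Pow {1..n}"]) (auto simp: component_union_def)

lemma card_component_unions_le:
  assumes "is_graph n G" "graph_connected n G" "W \<subseteq> {1..n}" "W \<noteq> {}"
  shows "card {U. component_union n G W U} \<le> 2 ^ card (nbhd n G W)"
proof -
  obtain z where z: "z \<in> W" using assms(4) by blast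
  have inj: "inj_on (\<lambda>U. U \<inter> nbhd n G W) {U. component_union n G W U}"
    using component_union_trace_mono[OF assms(1-3) z] by (intro inj_onI) (auto intro: subset_antisym)
  have fin: "finite (nbhd n G W)" unfolding nbhd_def by simp
  have "card {U. component_union n G W U} \<le> card (Pow (nbhd n G W))"
    by (rule card_inj_on_le[OF inj]) (use fin in auto)
  thus ?thesis using fin by (simp add: card_Pow)
qed

lemma degree_le_max_degree: "v \<in> {1..n} \<Longrightarrow> degree G v \<le> max_degree n G"
  unfolding max_degree_def by (rule Max_ge) auto

lemma card_nbhd_le:
  assumes G: "is_graph n G" and W: "W \<subseteq> {1..n}"
  shows "card (nbhd n G W) \<le> max_degree n G * card W"
proof -
  let ?N = "\<lambda>z. {u. {u, z} \<in> G \<and> u \<noteq> z}"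
  have fN: "finite (?N z)" for z
    by (rule finite_subset[of _ "{1..n}"]) (use is_graph_edgeD[OF G] in auto)
  have fW: "finite W" using W finite_subset by blast
  have "nbhd n G W \<subseteq> (\<Union>z\<in>W. ?N z)" unfolding nbhd_def by (auto simp: insert_commute)
  hence "card (nbhd n G W) \<le> card (\<Union>z\<in>W. ?N z)"
    by (rule card_mono[rotated]) (use fN fW in auto)
  also have "\<dots> \<le> (\<Sum>z\<in>W. card (?N z))" by (rule card_UN_le[OF fW])
  also have "\<dots> \<le> (\<Sum>z\<in>W. max_degree n G)"
    by (rule sum_mono) (use degree_le_max_degree W in \<open>auto simp: degree_def\<close>)
  finally show ?thesis by (simp add: mult.commute)
qed

lemma max_degree_ge_1:
  assumes G: "is_graph n G" and "graph_connected n G" "n \<ge> 2"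
  shows "max_degree n G \<ge> 1"
proof -
  obtain b where b: "b \<noteq> 1" "{1, b} \<in> G"
    using connected_edge_leaving[of n G 1 "{1}" 2] assms by auto
  have "finite {u. {u, 1} \<in> G \<and> u \<noteq> 1}"
    by (rule finite_subset[of _ "{1..n}"]) (use is_graph_edgeD[OF G] in auto)
  moreover have "b \<in> {u. {u, 1} \<in> G \<and> u \<noteq> 1}" using b by (auto simp: insert_commute)
  ultimately have "degree G 1 \<ge> 1" unfolding degree_def by (metis card_0_eq empty_iff leI less_one)
  moreover have "degree G 1 \<le> max_degree n G" by (rule degree_le_max_degree) (use assms in auto)
  ultimately show ?thesis by simp
qed

lemma connected_nbhd_nonempty:
  assumes G: "is_graph n G" and conn: "graph_connected n G" and GH: "G \<subseteq> H"
    and U: "U \<subseteq> {1..n}" "U \<noteq> {}" "U \<noteq> {1..n}"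
  shows "nbhd n H U \<noteq> {}"
proof -
  obtain x z where "x \<in> U" "z \<in> {1..n}" "z \<notin> U" using U by blast
  then obtain a b where "a \<in> U" "b \<notin> U" "{a, b} \<in> G"
    using connected_edge_leaving[OF conn _ U(1)] by blast
  hence "b \<in> nbhd n H U" unfolding nbhd_def using is_graph_edgeD[OF G] GH by blast
  thus ?thesis by blast
qed

subsection \<open>Sets with small vertex boundary\<close>

definition edges_between :: "nat set \<Rightarrow> nat set \<Rightarrow> nat set set" where
  "edges_between A B = (\<lambda>(x, y). {x, y}) ` (A \<times> B)"

lemma edges_between_subset_all_edges:
  "A \<subseteq> {1..n} \<Longrightarrow> B \<subseteq> {1..n} \<Longrightarrow> A \<inter> B = {} \<Longrightarrow> edges_between A B \<subseteq> all_edges n"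
  unfolding edges_between_def all_edges_def by fast

lemma card_edges_between:
  assumes "A \<inter> B = {}"
  shows "card (edges_between A B) = card A * card B"
proof -
  have "inj_on (\<lambda>(x, y). {x, y}) (A \<times> B)"
    using assms unfolding inj_on_def by (auto simp: doubleton_eq_iff)
  thus ?thesis unfolding edges_between_def by (simp add: card_image card_cartesian_product)
qed

text \<open>The sets U violating \<alpha>-expansion whose G \<union> R-boundary could be W.\<close>
definition small_boundary_sets :: "nat \<Rightarrow> nat set set \<Rightarrow> real \<Rightarrow> nat set \<Rightarrow> nat set set" where
  "small_boundary_sets n G \<alpha> W = {U. component_union n G W U \<and> 0 < card U
      \<and> real (card U) \<le> real n / 2 \<and> real (card W) < \<alpha> * real (card U)}"

lemma small_boundary_sets_Pow: "small_boundary_sets n G \<alpha> W \<subseteq> Pow {1..n}"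
  unfolding small_boundary_sets_def component_union_def by auto

lemma iota_less_witness:
  assumes G: "is_graph n G" and conn: "graph_connected n G" and n2: "n \<ge> 2"
    and less: "iota n (G \<union> R) < \<alpha>"
  shows "\<exists>W U. W \<subseteq> {1..n} \<and> W \<noteq> {} \<and> U \<in> small_boundary_sets n G \<alpha> W
           \<and> R \<inter> edges_between U ({1..n} - U - W) = {}"
proof -
  let ?f = "\<lambda>U. real (card (nbhd n (G \<union> R) U)) / real (card U)"
  let ?S = "{?f U | U. U \<subseteq> {1..n} \<and> 0 < card U \<and> real (card U) \<le> real n / 2}"
  have fin: "finite ?S" by (rule finite_subset[of _ "?f ` Pow {1..n}"]) auto
  have "?f {1} \<in> ?S" using n2 by (intro CollectI exI[of _ "{1}"]) auto
  hence "?S \<noteq> {}" by blast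
  with less fin obtain U where U: "U \<subseteq> {1..n}" "0 < card U" "real (card U) \<le> real n / 2" "?f U < \<alpha>"
    unfolding iota_def by (auto simp: Min_less_iff)
  define W where "W = nbhd n (G \<union> R) U"
  have W: "W \<subseteq> {1..n}" "U \<inter> W = {}" unfolding W_def nbhd_def by auto
  have "real (card W) < \<alpha> * real (card U)"
    using U(2,4) unfolding W_def by (simp add: divide_less_eq)
  moreover have "component_union n G W U"
    using U(1) W is_graph_edgeD[OF G] unfolding component_union_def W_def nbhd_def by blast
  ultimately have "U \<in> small_boundary_sets n G \<alpha> W"
    using U(2,3) unfolding small_boundary_sets_def by blast
  moreover have "W \<noteq> {}"
    unfolding W_def using U(1-3) n2 by (intro connected_nbhd_nonempty[OF G conn]) auto
  moreover have "R \<inter> edges_between U ({1..n} - U - W) = {}"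
  proof (rule ccontr)
    assume "R \<inter> edges_between U ({1..n} - U - W) \<noteq> {}"
    then obtain a b where "a \<in> U" "b \<in> {1..n} - U - W" "{a, b} \<in> R"
      unfolding edges_between_def by (auto simp del: Diff_iff)
    thus False unfolding W_def nbhd_def by blast
  qed
  ultimately show ?thesis using W by blast
qed

subsection \<open>The probability estimate\<close>

lemma crossing_edges_expectation_ge:
  fixes \<epsilon> D L u w n :: real
  assumes e: "\<epsilon> > 0" and n: "n > 0" and D: "D \<ge> 1" and L: "\<epsilon> \<le> L"
    and u0: "0 \<le> u" and un: "u \<le> n / 2" and w0: "0 \<le> w"
    and wu: "w < \<epsilon> / 40 / (D ^ 3 * L) * u"
  shows "10 * w * D ^ 3 * L \<le> \<epsilon> / n * (u * (n - u - w))"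
proof -
  have "1 \<le> D ^ 3" using D by simp
  hence DL: "\<epsilon> \<le> D ^ 3 * L" using L e by (simp add: order_trans[OF _ mult_le_cancel_right1[THEN iffD2]])
  hence DLp: "D ^ 3 * L > 0" using e by linarith
  have "w * (D ^ 3 * L) < \<epsilon> / 40 / (D ^ 3 * L) * u * (D ^ 3 * L)"
    using wu DLp by (rule mult_strict_right_mono)
  also have "\<epsilon> / 40 / (D ^ 3 * L) * u * (D ^ 3 * L) = \<epsilon> * u / 40"
  proof -
    have "K \<noteq> 0 \<Longrightarrow> \<epsilon> / 40 / K * u * K = \<epsilon> * u / 40" for K :: real by simp
    thus ?thesis using DLp by (metis less_irrefl)
  qed
  finally have wDL: "w * (D ^ 3 * L) < \<epsilon> * u / 40" .
  have "w * \<epsilon> \<le> w * (D ^ 3 * L)" using DL w0 by (rule mult_left_mono)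
  hence "\<epsilon> * w < \<epsilon> * (u / 40)" using wDL by (simp add: mult.commute)
  hence "w < u / 40" using e by simp
  hence "n / 4 \<le> n - u - w" using un u0 by linarith
  hence "\<epsilon> / n * (u * (n / 4)) \<le> \<epsilon> / n * (u * (n - u - w))"
    using u0 e n by (intro mult_left_mono) auto
  moreover have "\<epsilon> / n * (u * (n / 4)) = \<epsilon> * u / 4" using n by simp
  ultimately show ?thesis using wDL by (simp add: algebra_simps)
qed

context
  fixes n :: nat and G :: "nat set set" and \<epsilon> \<Delta> \<alpha> p :: real
  defines "\<Delta> \<equiv> real (max_degree n G)"
    and "\<alpha> \<equiv> \<epsilon> / 40 / (\<Delta> ^ 3 * ln (real n))"
    and "p \<equiv> \<epsilon> / real n"
  assumes G: "is_graph n G" and conn: "graph_connected n G" and n2: "n \<ge> 2"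
    and e: "\<epsilon> > 0" and en: "\<epsilon> \<le> real n" and eL: "\<epsilon> \<le> ln (real n)"
begin

lemma p_bounds: "0 \<le> p" "p \<le> 1"
  unfolding p_def using e en n2 by auto

lemma \<Delta>_ge_1: "\<Delta> \<ge> 1"
  unfolding \<Delta>_def using max_degree_ge_1[OF G conn n2] by simp

lemma missing_crossing_edges_le:
  assumes W: "W \<subseteq> {1..n}" and U: "U \<in> small_boundary_sets n G \<alpha> W"
  shows "(1 - p) ^ card (edges_between U ({1..n} - U - W))
           \<le> exp (- (10 * real (card W) * \<Delta> ^ 3 * ln (real n)))"
proof -
  have U': "U \<subseteq> {1..n}" "U \<inter> W = {}" "0 < card U" "real (card U) \<le> real n / 2"
    "real (card W) < \<alpha> * real (card U)"
    using U unfolding small_boundary_sets_def component_union_def by auto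
  have "{1..n} - U - W = {1..n} - (U \<union> W)" by blast
  hence "card ({1..n} - U - W) = n - card (U \<union> W)"
    using W U'(1) by (simp add: card_Diff_subset finite_subset)
  moreover have "card (U \<union> W) = card U + card W"
    using W U' by (simp add: card_Un_disjoint finite_subset)
  moreover have "card (U \<union> W) \<le> n"
    using W U'(1) by (metis card_atLeastAtMost card_mono diff_Suc_1 finite_atLeastAtMost le_sup_iff)
  ultimately have "real (card ({1..n} - U - W)) = real n - real (card U) - real (card W)"
    by simp
  moreover have "card (edges_between U ({1..n} - U - W)) = card U * card ({1..n} - U - W)"
    by (rule card_edges_between) blast
  ultimately have card_eq: "real (card (edges_between U ({1..n} - U - W)))
      = real (card U) * (real n - real (card U) - real (card W))"
    by simp
  have "10 * real (card W) * \<Delta> ^ 3 * ln (real n)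
      \<le> \<epsilon> / real n * (real (card U) * (real n - real (card U) - real (card W)))"
    by (rule crossing_edges_expectation_ge[OF e _ \<Delta>_ge_1 eL]) (use U' n2 in \<open>auto simp: \<alpha>_def\<close>)
  also have "\<dots> = p * real (card (edges_between U ({1..n} - U - W)))"
    unfolding card_eq p_def ..
  finally have "exp (- (p * real (card (edges_between U ({1..n} - U - W)))))
      \<le> exp (- (10 * real (card W) * \<Delta> ^ 3 * ln (real n)))"
    by simp
  thus ?thesis using one_minus_power_le_exp[OF p_bounds(2)] by (rule order_trans[rotated])
qed

lemma card_small_boundary_sets_le:
  assumes W: "W \<subseteq> {1..n}" "W \<noteq> {}"
  shows "real (card (small_boundary_sets n G \<alpha> W)) \<le> exp (\<Delta> * real (card W) * ln (real n))"
proof -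
  have "card (small_boundary_sets n G \<alpha> W) \<le> card {U. component_union n G W U}"
    by (rule card_mono[OF finite_component_unions]) (auto simp: small_boundary_sets_def)
  also have "\<dots> \<le> 2 ^ card (nbhd n G W)" by (rule card_component_unions_le[OF G conn W])
  also have "\<dots> \<le> 2 ^ (max_degree n G * card W)"
    by (rule power_increasing) (use card_nbhd_le[OF G W(1)] in auto)
  finally have "real (card (small_boundary_sets n G \<alpha> W)) \<le> 2 ^ (max_degree n G * card W)"
    by (metis of_nat_le_iff of_nat_numeral of_nat_power)
  also have "\<dots> \<le> real n ^ (max_degree n G * card W)" by (rule power_mono) (use n2 in auto)
  also have "\<dots> = exp (ln (real n)) ^ (max_degree n G * card W)" using n2 by simp
  also have "\<dots> = exp (\<Delta> * real (card W) * ln (real n))"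
    unfolding \<Delta>_def by (simp add: exp_of_nat_mult[symmetric] mult.assoc)
  finally show ?thesis .
qed

lemma sum_small_boundary_sets_le:
  assumes W: "W \<subseteq> {1..n}" "W \<noteq> {}"
  shows "(\<Sum>U\<in>small_boundary_sets n G \<alpha> W. (1 - p) ^ card (edges_between U ({1..n} - U - W)))
           \<le> exp (- 9 * ln (real n)) ^ card W"
proof -
  let ?w = "real (card W)" and ?L = "ln (real n)"
  have "(\<Sum>U\<in>small_boundary_sets n G \<alpha> W. (1 - p) ^ card (edges_between U ({1..n} - U - W)))
      \<le> real (card (small_boundary_sets n G \<alpha> W)) * exp (- (10 * ?w * \<Delta> ^ 3 * ?L))"
    using sum_mono[OF missing_crossing_edges_le[OF W(1)]] by simp
  also have "\<dots> \<le> exp (\<Delta> * ?w * ?L) * exp (- (10 * ?w * \<Delta> ^ 3 * ?L))"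
    by (rule mult_right_mono[OF card_small_boundary_sets_le[OF W]]) simp
  also have "\<dots> \<le> exp (?w * (- 9 * ?L))"
  proof -
    have "\<Delta> \<le> \<Delta> ^ 3" "1 \<le> \<Delta> ^ 3"
      using \<Delta>_ge_1 by (simp_all add: self_le_power)
    moreover have "0 \<le> ?w * ?L" using e eL by simp
    ultimately have "\<Delta> * (?w * ?L) \<le> \<Delta> ^ 3 * (?w * ?L)" "?w * ?L \<le> \<Delta> ^ 3 * (?w * ?L)"
      by (auto intro: mult_right_mono simp: mult_le_cancel_right1)
    thus ?thesis by (simp add: exp_add[symmetric] algebra_simps)
  qed
  also have "\<dots> = exp (- 9 * ?L) ^ card W" by (rule exp_of_nat_mult)
  finally show ?thesis .
qed

lemma gnp_prob_iota_less_le_sum: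
  "gnp_prob n p (\<lambda>R. \<not> \<alpha> \<le> iota n (G \<union> R))
     \<le> (\<Sum>W\<in>Pow {1..n} - {{}}. \<Sum>U\<in>small_boundary_sets n G \<alpha> W.
            (1 - p) ^ card (edges_between U ({1..n} - U - W)))"
proof -
  define S where "S = small_boundary_sets n G \<alpha>"
  define I where "I = Sigma (Pow {1..n} - {{}}) S"
  define F where "F = (\<lambda>(W, U). edges_between U ({1..n} - U - W))"
  have fS: "finite (S W)" for W
    unfolding S_def by (rule finite_subset[OF small_boundary_sets_Pow]) simp
  have "gnp_prob n p (\<lambda>R. \<not> \<alpha> \<le> iota n (G \<union> R)) \<le> (\<Sum>i\<in>I. (1 - p) ^ card (F i))"
  proof (rule gnp_prob_union_bound[OF p_bounds])
    show "finite I" unfolding I_def using fS by auto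
    show "F i \<subseteq> all_edges n" if i: "i \<in> I" for i
    proof -
      obtain W U where "i = (W, U)" "U \<in> S W" using i unfolding I_def by blast
      hence "i = (W, U)" "U \<subseteq> {1..n}" using small_boundary_sets_Pow unfolding S_def by blast+
      thus ?thesis unfolding F_def using edges_between_subset_all_edges[of U n "{1..n} - U - W"] by auto
    qed
    show "\<exists>i\<in>I. R \<inter> F i = {}" if "\<not> \<alpha> \<le> iota n (G \<union> R)" for R
      using iota_less_witness[OF G conn n2, of R \<alpha>] that unfolding I_def S_def F_def by force
  qed
  also have "\<dots> = (\<Sum>(W, U)\<in>I. (1 - p) ^ card (F (W, U)))"
    by (rule sum.cong) auto
  also have "\<dots> = (\<Sum>W\<in>Pow {1..n} - {{}}. \<Sum>U\<in>S W. (1 - p) ^ card (F (W, U)))"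
    unfolding I_def by (rule sum.Sigma[symmetric]) (use fS in auto)
  finally show ?thesis unfolding S_def F_def by simp
qed

lemma gnp_prob_iota_less_le:
  "gnp_prob n p (\<lambda>R. \<not> \<alpha> \<le> iota n (G \<union> R)) \<le> exp (real n * exp (- 9 * ln (real n))) - 1"
  (is "?fail \<le> _")
proof -
  define x where "x = exp (- 9 * ln (real n))"
  have "?fail \<le> (\<Sum>W\<in>Pow {1..n} - {{}}. x ^ card W)"
    using gnp_prob_iota_less_le_sum
  proof (rule order_trans)
    show "(\<Sum>W\<in>Pow {1..n} - {{}}. \<Sum>U\<in>small_boundary_sets n G \<alpha> W.
            (1 - p) ^ card (edges_between U ({1..n} - U - W))) \<le> (\<Sum>W\<in>Pow {1..n} - {{}}. x ^ card W)"
      unfolding x_def by (rule sum_mono) (rule sum_small_boundary_sets_le; blast)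
  qed
  also have "\<dots> = (x + 1) ^ n - 1"
    using sum.remove[of "Pow {1..n}" "{}" "\<lambda>W. x ^ card W"]
      sum_Pow_binomial[of "{1..n}" x 1] by simp
  also have "(x + 1) ^ n \<le> exp x ^ n"
    by (rule power_mono) (use exp_ge_add_one_self[of x] in \<open>auto simp: x_def add.commute\<close>)
  also have "exp x ^ n = exp (real n * x)" by (rule exp_of_nat_mult[symmetric])
  finally have "?fail \<le> exp (real n * x) - 1" by simp
  thus ?thesis unfolding x_def .
qed

end

theorem theorem1:
  fixes \<epsilon> :: real
  assumes "\<epsilon> > 0"
  shows "\<exists>\<delta>>0. \<forall>G :: nat \<Rightarrow> nat set set.
           (\<forall>n. is_graph n (G n) \<and> graph_connected n (G n)) \<longrightarrow>
           (\<lambda>n. gnp_prob n (\<epsilon> / real n)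
                  (\<lambda>R. iota n (G n \<union> R) \<ge> \<delta> / (real (max_degree n (G n)) ^ 3 * ln (real n))))
             \<longlonglongrightarrow> 1"
proof (intro exI[of _ "\<epsilon> / 40"] conjI allI impI)
  show "\<epsilon> / 40 > 0" using assms by simp
  fix G :: "nat \<Rightarrow> nat set set"
  assume G: "\<forall>n. is_graph n (G n) \<and> graph_connected n (G n)"
  let ?P = "\<lambda>n R. \<epsilon> / 40 / (real (max_degree n (G n)) ^ 3 * ln (real n)) \<le> iota n (G n \<union> R)"
  let ?g = "\<lambda>n. gnp_prob n (\<epsilon> / real n) (?P n)"
  have large: "\<forall>\<^sub>F n in sequentially. 2 \<le> n \<and> \<epsilon> \<le> real n \<and> \<epsilon> \<le> ln (real n)"
    by (intro eventually_conj) real_asymp+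
  have "\<forall>\<^sub>F n in sequentially. 2 - exp (real n * exp (- 9 * ln (real n))) \<le> ?g n"
    using large
  proof (rule eventually_mono)
    fix n assume "2 \<le> n \<and> \<epsilon> \<le> real n \<and> \<epsilon> \<le> ln (real n)"
    hence "gnp_prob n (\<epsilon> / real n) (\<lambda>R. \<not> ?P n R) \<le> exp (real n * exp (- 9 * ln (real n))) - 1"
      using gnp_prob_iota_less_le[of n "G n" \<epsilon>] G assms by blast
    thus "2 - exp (real n * exp (- 9 * ln (real n))) \<le> ?g n"
      using gnp_prob_compl[of n "\<epsilon> / real n" "?P n"] by linarith
  qed
  moreover have "\<forall>\<^sub>F n in sequentially. ?g n \<le> 1"
    using large by (rule eventually_mono) (intro gnp_prob_le_1; use assms in auto)
  moreover have "(\<lambda>n. 2 - exp (real n * exp (- 9 * ln (real n)))) \<longlonglongrightarrow> 1" by real_asymp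
  ultimately show "?g \<longlonglongrightarrow> 1" by (rule tendsto_sandwich[OF _ _ _ tendsto_const])
qed

end
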